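(* In the standing setting (assuming (MP)), the Bellman bid never exceeds the straightforward bid: $\beta^v(0,k)\le\sigma^v(0)$ for all $k\in\{0,\dots,m\}$, and for every $t\in\{1,\dots,\overline R-1\}$, $k\in\{0,\dots,m\}$, $\delta\in\{0,\dots,N\}$, $$\beta^v(t,k,\delta)\le\sigma^v(t).$$
   Context: Standing setting. Integers $n\ge2$, $m\ge1$; $N:=(n-1)m$. Reals $p_{\mathrm{init}}\ge0$, $\Delta P>0$; the price at round $t\ge0$ is $p_t:=p_{\mathrm{init}}+t\Delta P$. The player's valuation $v:\{0,\dots,m\}\to[0,\infty)$ satisfies $v(0)=0$ and is non-decreasing and concave. $\overline R:=\lceil (v(1)-p_{\mathrm{init}})/\Delta P\rceil$, assumed $\ge1$. For $t\ge0$, $\sigma^v(t):=\min\operatorname{argmax}_{0\le u\le m}(v(u)-up_t)$. The opponent is given by random variables $Z_1\ge Z_2\ge\dots\ge Z_N\ge0$ (a.s.) on a probability space $(\Omega,\mathcal F,\mathbb P)$; its demand at price $p$ is $\delta(p):=\sum_{j=1}^N\mathbf 1\{Z_j>p\}$. For $t\ge1$ fix transition kernels $K_t(\delta'\mid\delta)$ ($\delta,\delta'\in\{0,\dots,N\}$), each $K_t(\cdot\mid\delta)$ a probability on $\{0,\dots,\delta\}$, with $K_t(\delta'\mid\delta)=\mathbb P(\delta(p_t)=\delta'\mid\delta(p_{t-1})=\delta)$ whenever $\mathbb P(\delta(p_{t-1})=\delta)>0$. Value function: for $t\in\{1,\dots,\overline R\}$, $k\in\{0,\dots,m\}$, $\delta\in\{0,\dots,N\}$: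 $\varphi^v(t,k,\delta):=v(k)-kp_{t-1}$ if $k+\delta\le m$; $:=\max_{0\le u\le k}\sum_{\delta'=0}^N K_t(\delta'\mid\delta)\varphi^v(t+1,u,\delta')$ if $k+\delta>m$ and $t<\overline R$; $:=0$ if $k+\delta>m$ and $t=\overline R$. Also $\varphi^v(0,k):=\max_{0\le u\le k}\sum_{\delta'}\mathbb P(\delta(p_0)=\delta')\varphi^v(1,u,\delta')$. Bellman strategy: $\beta^v(0,k):=\min\operatorname{argmax}_{0\le u\le k}\sum_{\delta'}\mathbb P(\delta(p_0)=\delta')\varphi^v(1,u,\delta')$, and for $t\in\{1,\dots,\overline R-1\}$, $\beta^v(t,k,\delta):=\min\operatorname{argmax}_{0\le u\le k}\sum_{\delta'}K_t(\delta'\mid\delta)\varphi^v(t+1,u,\delta')$. Markov property (MP): $(\delta(p_t))_{0\le t\le\overline R}$ is a Markov chain. *)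

theory Defs
  imports "HOL-Probability.Probability"
begin

definition price :: "real \<Rightarrow> real \<Rightarrow> nat \<Rightarrow> real" where
  "price pinit dP t = pinit + real t * dP"

definition min_argmax :: "(nat \<Rightarrow> real) \<Rightarrow> nat set \<Rightarrow> nat" where
  "min_argmax f A = Min {u \<in> A. \<forall>w\<in>A. f w \<le> f u}"

definition sigma :: "(nat \<Rightarrow> real) \<Rightarrow> nat \<Rightarrow> real \<Rightarrow> real \<Rightarrow> nat \<Rightarrow> nat" where
  "sigma v m pinit dP t = min_argmax (\<lambda>u. v u - real u * price pinit dP t) {0..m}"

definition Rbar :: "(nat \<Rightarrow> real) \<Rightarrow> real \<Rightarrow> real \<Rightarrow> nat" where
  "Rbar v pinit dP = nat \<lceil>(v 1 - pinit) / dP\<rceil>"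

definition demand :: "(nat \<Rightarrow> 'a \<Rightarrow> real) \<Rightarrow> nat \<Rightarrow> real \<Rightarrow> 'a \<Rightarrow> nat" where
  "demand Z N p \<omega> = (\<Sum>j=1..N. if Z j \<omega> > p then 1 else 0)"

text \<open>Auxiliary value function by number s of remaining rounds:
  phi_aux s t k d with s = Rbar - t.\<close>
fun phi_aux :: "(nat \<Rightarrow> real) \<Rightarrow> nat \<Rightarrow> nat \<Rightarrow> real \<Rightarrow> real \<Rightarrow>
    (nat \<Rightarrow> nat \<Rightarrow> nat \<Rightarrow> real) \<Rightarrow> nat \<Rightarrow> nat \<Rightarrow> nat \<Rightarrow> nat \<Rightarrow> real" where
  "phi_aux v m N pinit dP K 0 t k d =
     (if k + d \<le> m then v k - real k * price pinit dP (t - 1) else 0)"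
| "phi_aux v m N pinit dP K (Suc s) t k d =
     (if k + d \<le> m then v k - real k * price pinit dP (t - 1)
      else Max ((\<lambda>u. \<Sum>d'=0..N. K t d d' * phi_aux v m N pinit dP K s (t+1) u d') ` {0..k}))"

text \<open>Value function phi^v(t,k,delta) for t in {1..Rbar}; K t d d' = K_t(d' | d).\<close>
definition phi :: "(nat \<Rightarrow> real) \<Rightarrow> nat \<Rightarrow> nat \<Rightarrow> real \<Rightarrow> real \<Rightarrow>
    (nat \<Rightarrow> nat \<Rightarrow> nat \<Rightarrow> real) \<Rightarrow> nat \<Rightarrow> nat \<Rightarrow> nat \<Rightarrow> real" where
  "phi v m N pinit dP K t k d = phi_aux v m N pinit dP K (Rbar v pinit dP - t) t k d"

definition beta :: "(nat \<Rightarrow> real) \<Rightarrow> nat \<Rightarrow> nat \<Rightarrow> real \<Rightarrow> real \<Rightarrow>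
    (nat \<Rightarrow> nat \<Rightarrow> nat \<Rightarrow> real) \<Rightarrow> nat \<Rightarrow> nat \<Rightarrow> nat \<Rightarrow> nat" where
  "beta v m N pinit dP K t k d =
     min_argmax (\<lambda>u. \<Sum>d'=0..N. K t d d' * phi v m N pinit dP K (t+1) u d') {0..k}"

definition beta0 :: "'a measure \<Rightarrow> (nat \<Rightarrow> 'a \<Rightarrow> real) \<Rightarrow> (nat \<Rightarrow> real) \<Rightarrow> nat \<Rightarrow> nat \<Rightarrow> real \<Rightarrow> real \<Rightarrow>
    (nat \<Rightarrow> nat \<Rightarrow> nat \<Rightarrow> real) \<Rightarrow> nat \<Rightarrow> nat" where
  "beta0 M Z v m N pinit dP K k =
     min_argmax (\<lambda>u. \<Sum>d'=0..N.
        measure M {\<omega> \<in> space M. demand Z N (price pinit dP 0) \<omega> = d'} * phi v m N pinit dP K 1 u d')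
       {0..k}"

text \<open>Markov property of the discrete process X_0,...,X_R (values in nat):
  for all t in 1..R and all histories x, P(X_0=x_0,...,X_t=x_t) P(X_{t-1}=x_{t-1})
  = P(X_0=x_0,...,X_{t-1}=x_{t-1}) P(X_{t-1}=x_{t-1}, X_t=x_t),
  i.e. P(X_t = x_t | X_0..X_{t-1}) = P(X_t = x_t | X_{t-1}) whenever defined.\<close>
definition markov_upto :: "'a measure \<Rightarrow> (nat \<Rightarrow> 'a \<Rightarrow> nat) \<Rightarrow> nat \<Rightarrow> bool" where
  "markov_upto M X R \<longleftrightarrow>
    (\<forall>t\<in>{1..R}. \<forall>x::nat \<Rightarrow> nat.
       measure M {\<omega> \<in> space M. \<forall>i\<le>t. X i \<omega> = x i} * measure M {\<omega> \<in> space M. X (t-1) \<omega> = x (t-1)}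
     = measure M {\<omega> \<in> space M. \<forall>i\<le>t-1. X i \<omega> = x i} *
       measure M {\<omega> \<in> space M. X (t-1) \<omega> = x (t-1) \<and> X t \<omega> = x t})"

end

theory Submission
  imports Defs
begin

text \<open>Prices rise from round to round, so the straightforward bid \<open>\<sigma>(t)\<close> decreases in \<open>t\<close> and
  the best quasi-linear utility available at a later round is never larger than at an earlier one.
  By backward induction over the remaining rounds, the value \<open>\<phi>(t+1, u, \<delta>)\<close> of keeping a
  demand \<open>u \<ge> \<sigma>(t)\<close> is then at most that of keeping \<open>\<sigma>(t)\<close>: if the auction ends now,
  \<open>\<sigma>(t)\<close> maximises the utility at price \<open>p\<^sub>t\<close>, which bounds every continuation value;
  otherwise any later reduction from \<open>u\<close> either stays below \<open>\<sigma>(t)\<close>, hence is also available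
  from \<open>\<sigma>(t)\<close>, or is dominated by \<open>\<sigma>(t+1) \<le> \<sigma>(t)\<close> by induction. Averaging over the
  next demand of the opponent with non-negative weights preserves these inequalities, so the
  smallest maximiser of the expected continuation value never exceeds \<open>\<sigma>(t)\<close>.\<close>

abbreviation utility :: "(nat \<Rightarrow> real) \<Rightarrow> real \<Rightarrow> nat \<Rightarrow> real" where
  "utility v p u \<equiv> v u - real u * p"

lemma min_argmax_in:
  assumes "finite A" "A \<noteq> {}"
  shows "min_argmax f A \<in> A" and "w \<in> A \<Longrightarrow> f w \<le> f (min_argmax f A)"
proof -
  let ?S = "{u \<in> A. \<forall>w\<in>A. f w \<le> f u}"
  have "Max (f ` A) \<in> f ` A" using assms by (intro Max_in) auto
  then obtain x where "x \<in> A" "f x = Max (f ` A)" by auto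
  then have "x \<in> ?S" using assms by simp
  then have "Min ?S \<in> ?S" using assms by (intro Min_in) auto
  then show "min_argmax f A \<in> A" and "w \<in> A \<Longrightarrow> f w \<le> f (min_argmax f A)"
    unfolding min_argmax_def by auto
qed

lemma min_argmax_le:
  assumes "finite A" "u \<in> A" "\<And>w. w \<in> A \<Longrightarrow> f w \<le> f u"
  shows "min_argmax f A \<le> u"
  unfolding min_argmax_def using assms by (intro Min_le) auto

lemma min_argmax_atLeastAtMost_le:
  assumes "\<And>w. w \<le> k \<Longrightarrow> s < w \<Longrightarrow> f w \<le> f s"
  shows "min_argmax f {0..k} \<le> s"
proof -
  let ?w = "min_argmax f {0..k}"
  have "?w \<le> k" and maximal: "\<And>x. x \<le> k \<Longrightarrow> f x \<le> f ?w"
    using min_argmax_in[where A="{0..k}" and f=f] by auto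
  show ?thesis
  proof (cases "?w \<le> s")
    case False
    then have "s \<le> k" and "f ?w \<le> f s" using \<open>?w \<le> k\<close> assms by auto
    then show ?thesis using maximal by (intro min_argmax_le) (auto intro: order_trans)
  qed simp
qed

lemma Max_image_atLeastAtMost_le:
  fixes f :: "nat \<Rightarrow> 'a::linorder"
  assumes "c \<le> a" "\<And>w. a < w \<Longrightarrow> w \<le> b \<Longrightarrow> f w \<le> f c"
  shows "Max (f ` {0..b}) \<le> Max (f ` {0..a})"
proof -
  have "f w \<le> Max (f ` {0..a})" if "w \<le> b" for w
  proof (cases "w \<le> a")
    case True
    then show ?thesis by simp
  next
    case False
    then have "f w \<le> f c" using assms(2) that by simp
    also have "f c \<le> Max (f ` {0..a})" using assms(1) by (intro Max_ge) auto
    finally show ?thesis .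
  qed
  then show ?thesis by (simp add: Max_le_iff)
qed

lemma sigma_le: "sigma v m pinit dP t \<le> m"
  using min_argmax_in(1)[of "{0..m}"] unfolding sigma_def by auto

lemma utility_le_sigma:
  "w \<le> m \<Longrightarrow> utility v (price pinit dP t) w
     \<le> utility v (price pinit dP t) (sigma v m pinit dP t)"
  using min_argmax_in(2)[of "{0..m}" w] unfolding sigma_def by auto

lemma price_mono: "0 \<le> dP \<Longrightarrow> t \<le> t' \<Longrightarrow> price pinit dP t \<le> price pinit dP t'"
  unfolding price_def by (simp add: mult_right_mono)

lemma sigma_antimono:
  assumes "0 < dP" "t \<le> t'"
  shows "sigma v m pinit dP t' \<le> sigma v m pinit dP t"
proof -
  let ?s = "sigma v m pinit dP t" and ?s' = "sigma v m pinit dP t'"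
  let ?p = "price pinit dP t" and ?p' = "price pinit dP t'"
  have "\<not> ?s < ?s'"
  proof
    assume "?s < ?s'"
    with assms(2) have "t < t'" by (cases "t = t'") auto
    with \<open>?s < ?s'\<close> have "0 < (real ?s' - real ?s) * (?p' - ?p)"
      using assms(1) unfolding price_def by (intro mult_pos_pos) auto
    moreover have "utility v ?p' ?s \<le> utility v ?p' ?s'" "utility v ?p ?s' \<le> utility v ?p ?s"
      using utility_le_sigma sigma_le by blast+
    ultimately show False by (simp add: algebra_simps)
  qed
  then show ?thesis by simp
qed

lemma optimal_utility_antimono:
  assumes "0 \<le> dP" "t \<le> t'"
  shows "utility v (price pinit dP t') (sigma v m pinit dP t')
     \<le> utility v (price pinit dP t) (sigma v m pinit dP t)"
proof -
  let ?s' = "sigma v m pinit dP t'"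
  have "real ?s' * price pinit dP t \<le> real ?s' * price pinit dP t'"
    using price_mono[OF assms] by (intro mult_left_mono) auto
  then have "utility v (price pinit dP t') ?s' \<le> utility v (price pinit dP t) ?s'"
    by simp
  also have "\<dots> \<le> utility v (price pinit dP t) (sigma v m pinit dP t)"
    using utility_le_sigma sigma_le by blast
  finally show ?thesis .
qed

locale bellman_recursion =
  fixes v :: "nat \<Rightarrow> real" and m N :: nat and pinit dP :: real
    and K :: "nat \<Rightarrow> nat \<Rightarrow> nat \<Rightarrow> real"
  assumes v_zero: "v 0 = 0"
    and dP_pos: "0 < dP"
    and kernel_nonneg: "\<And>t d d'. 1 \<le> t \<Longrightarrow> d \<le> N \<Longrightarrow> 0 \<le> K t d d'"
    and kernel_sum: "\<And>t d. 1 \<le> t \<Longrightarrow> d \<le> N \<Longrightarrow> (\<Sum>d'=0..N. K t d d') = 1"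
begin

abbreviation \<Phi> where "\<Phi> \<equiv> phi_aux v m N pinit dP K"
abbreviation \<sigma> where "\<sigma> \<equiv> sigma v m pinit dP"
abbreviation p where "p \<equiv> price pinit dP"

lemma utility_le_\<sigma>: "w \<le> m \<Longrightarrow> utility v (p t) w \<le> utility v (p t) (\<sigma> t)"
  by (rule utility_le_sigma)

lemma optimal_utility_nonneg: "0 \<le> utility v (p t) (\<sigma> t)"
  using utility_le_\<sigma>[of 0] v_zero by simp

lemma kernel_expectation_mono:
  assumes "d \<le> N" "\<And>d'. d' \<le> N \<Longrightarrow> f d' \<le> g d'"
  shows "(\<Sum>d'=0..N. K (Suc t) d d' * f d') \<le> (\<Sum>d'=0..N. K (Suc t) d d' * g d')"
  using assms kernel_nonneg by (intro sum_mono mult_left_mono) auto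

lemma kernel_expectation_const:
  "d \<le> N \<Longrightarrow> (\<Sum>d'=0..N. K (Suc t) d d' * c) = c"
  using kernel_sum[of "Suc t" d] by (simp add: sum_distrib_right[symmetric])

lemma phi_aux_le_optimal_utility:
  "d \<le> N \<Longrightarrow> \<Phi> s (Suc t) k d \<le> utility v (p t) (\<sigma> t)"
proof (induction s arbitrary: t k d)
  case 0
  then show ?case using utility_le_\<sigma>[of k] optimal_utility_nonneg by auto
next
  case (Suc s)
  have "(\<Sum>d'=0..N. K (Suc t) d d' * \<Phi> s (Suc (Suc t)) u d') \<le> utility v (p t) (\<sigma> t)"
    for u
  proof -
    have "(\<Sum>d'=0..N. K (Suc t) d d' * \<Phi> s (Suc (Suc t)) u d')
        \<le> (\<Sum>d'=0..N. K (Suc t) d d' * utility v (p (Suc t)) (\<sigma> (Suc t)))"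
      using Suc by (intro kernel_expectation_mono) auto
    also have "\<dots> = utility v (p (Suc t)) (\<sigma> (Suc t))"
      using Suc.prems by (rule kernel_expectation_const)
    also have "\<dots> \<le> utility v (p t) (\<sigma> t)"
      using dP_pos by (intro optimal_utility_antimono) auto
    finally show ?thesis .
  qed
  then show ?case using utility_le_\<sigma>[of k] by (auto simp: Max_le_iff)
qed

lemma phi_aux_sigma_dominates:
  "\<sigma> t \<le> u \<Longrightarrow> d \<le> N \<Longrightarrow> \<Phi> s (Suc t) u d \<le> \<Phi> s (Suc t) (\<sigma> t) d"
proof (induction s arbitrary: t u d)
  case 0
  then show ?case using utility_le_\<sigma>[of u] optimal_utility_nonneg by auto
next
  case (Suc s)
  let ?G = "\<lambda>w. \<Sum>d'=0..N. K (Suc t) d d' * \<Phi> s (Suc (Suc t)) w d'"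
  have "\<sigma> (Suc t) \<le> \<sigma> t" using dP_pos by (intro sigma_antimono) auto
  have "?G w \<le> ?G (\<sigma> (Suc t))" if "\<sigma> t < w" for w
    using Suc that \<open>\<sigma> (Suc t) \<le> \<sigma> t\<close> by (intro kernel_expectation_mono) auto
  then have "Max (?G ` {0..u}) \<le> Max (?G ` {0..\<sigma> t})"
    using \<open>\<sigma> (Suc t) \<le> \<sigma> t\<close> by (intro Max_image_atLeastAtMost_le)
  moreover have "\<Phi> (Suc s) (Suc t) u d \<le> utility v (p t) (\<sigma> t)"
    using Suc.prems(2) by (rule phi_aux_le_optimal_utility)
  ultimately show ?case
    using utility_le_\<sigma>[of u] Suc.prems(1) by auto
qed

lemma min_argmax_expected_phi_le_sigma:
  assumes "\<And>d'. d' \<le> N \<Longrightarrow> 0 \<le> q d'"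
  shows "min_argmax (\<lambda>u. \<Sum>d'=0..N. q d' * phi v m N pinit dP K (Suc t) u d') {0..k} \<le> \<sigma> t"
  unfolding phi_def using assms phi_aux_sigma_dominates
  by (intro min_argmax_atLeastAtMost_le sum_mono mult_left_mono) auto

end

theorem mainTheorem8:
  fixes M :: "'a measure" and Z :: "nat \<Rightarrow> 'a \<Rightarrow> real"
    and n m :: nat and pinit dP :: real and v :: "nat \<Rightarrow> real"
    and K :: "nat \<Rightarrow> nat \<Rightarrow> nat \<Rightarrow> real"
  assumes "prob_space M"
    and "n \<ge> 2" and "m \<ge> 1"
    and "pinit \<ge> 0" and "dP > 0"
    and "v 0 = 0"
    and "\<And>u. u \<le> m \<Longrightarrow> v u \<ge> 0"
    and "\<And>u. u < m \<Longrightarrow> v u \<le> v (Suc u)"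
    and "\<And>u. 1 \<le> u \<Longrightarrow> u < m \<Longrightarrow> v (Suc u) - v u \<le> v u - v (u - 1)"
    and "\<lceil>(v 1 - pinit) / dP\<rceil> \<ge> 1"
    and "\<And>j. j \<in> {1..(n-1)*m} \<Longrightarrow> Z j \<in> borel_measurable M"
    and "AE \<omega> in M. (\<forall>j. 1 \<le> j \<and> j < (n-1)*m \<longrightarrow> Z (Suc j) \<omega> \<le> Z j \<omega>)
                     \<and> (\<forall>j\<in>{1..(n-1)*m}. Z j \<omega> \<ge> 0)"
    and "\<And>t d d'. 1 \<le> t \<Longrightarrow> d \<le> (n-1)*m \<Longrightarrow> K t d d' \<ge> 0"
    and "\<And>t d d'. 1 \<le> t \<Longrightarrow> d \<le> (n-1)*m \<Longrightarrow> d < d' \<Longrightarrow> K t d d' = 0"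
    and "\<And>t d. 1 \<le> t \<Longrightarrow> d \<le> (n-1)*m \<Longrightarrow> (\<Sum>d'=0..d. K t d d') = 1"
    and "\<And>t d d'. 1 \<le> t \<Longrightarrow> d \<le> (n-1)*m \<Longrightarrow> d' \<le> (n-1)*m \<Longrightarrow>
           measure M {\<omega> \<in> space M. demand Z ((n-1)*m) (price pinit dP (t-1)) \<omega> = d} > 0 \<Longrightarrow>
           K t d d' =
             measure M {\<omega> \<in> space M. demand Z ((n-1)*m) (price pinit dP (t-1)) \<omega> = d
                                   \<and> demand Z ((n-1)*m) (price pinit dP t) \<omega> = d'}
             / measure M {\<omega> \<in> space M. demand Z ((n-1)*m) (price pinit dP (t-1)) \<omega> = d}"
    and "markov_upto M (\<lambda>t. demand Z ((n-1)*m) (price pinit dP t)) (Rbar v pinit dP)"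
  shows "(\<forall>k\<le>m. beta0 M Z v m ((n-1)*m) pinit dP K k \<le> sigma v m pinit dP 0)
       \<and> (\<forall>t\<in>{1..Rbar v pinit dP - 1}. \<forall>k\<le>m. \<forall>d\<le>(n-1)*m.
            beta v m ((n-1)*m) pinit dP K t k d \<le> sigma v m pinit dP t)"
proof -
  have "(\<Sum>d'=0..(n-1)*m. K t d d') = 1" if "1 \<le> t" "d \<le> (n-1)*m" for t d
  proof -
    have "(\<Sum>d'=0..(n-1)*m. K t d d') = (\<Sum>d'=0..d. K t d d')"
      using that assms(14) by (intro sum.mono_neutral_right) auto
    then show ?thesis using assms(15) that by simp
  qed
  then interpret bellman_recursion v m "(n-1)*m" pinit dP K
    using assms(5,6,13) by unfold_locales auto
  show ?thesis
    unfolding beta0_def beta_def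
    using min_argmax_expected_phi_le_sigma[of _ 0] min_argmax_expected_phi_le_sigma[of "K _ _"]
      kernel_nonneg
    by (auto simp: One_nat_def)
qed

end
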